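(* Let $\alpha,\beta,\gamma,\delta\ge0$ with $\alpha+\beta+\gamma+\delta=1$, $\beta>0$, $\delta>0$, $\alpha+\gamma>0$. Put $\xi:=\alpha+\beta$, $D:=4\beta\delta+(2\xi-1)^2$, $\mu:=\frac{1-\sqrt D}{2}$. Then $$h(\mu)\ \ge\ h(\xi)-(\beta+\delta)\,h\Bigl(\frac{\beta}{\beta+\delta}\Bigr).$$
   Context: $h(t)=-t\log t-(1-t)\log(1-t)$ is the binary entropy function on $[0,1]$. *)

theory Defs
  imports Complex_Main
begin

definition h :: "real \<Rightarrow> real" where
  "h t = (if t = 0 then 0 else - t * ln t) + (if t = 1 then 0 else - (1 - t) * ln (1 - t))"

end

theory Submission
  imports Defs "HOL-Real_Asymp.Real_Asymp"
begin

(*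
  Parametrise the entropy by the product u = t (1 - t): if lower_root u is the root of
  t (1 - t) = u in (0, 1/2], then h t = H (t (1 - t)) for every t, where H = h o lower_root,
  because h is symmetric about 1/2.  Calculus on (0, 1/2] shows that h t / (t (1 - t))
  decreases and h t ^ 2 / (t (1 - t)) increases.  Hence H u / u decreases, so H is
  subadditive, and H u ^ 2 / u increases, so H (s^2 u) <= s H u for 0 < s <= 1.
  With p = beta / (beta + delta) we have xi (1 - xi) = mu (1 - mu) + beta delta and
  beta delta = (beta + delta)^2 p (1 - p), whence
    h xi = H (mu (1 - mu) + beta delta) <= h mu + H (beta delta) <= h mu + (beta + delta) h p.
*)

lemma h_eq_neg_mult_ln:
  assumes "0 < t" "t < 1"
  shows "h t = - t * ln t - (1 - t) * ln (1 - t)"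
  using assms unfolding h_def by (auto simp: algebra_simps)

lemma h_symmetric: "h (1 - t) = h t"
  unfolding h_def by (auto simp: algebra_simps)

lemma h_nonneg:
  assumes "0 \<le> t" "t \<le> 1"
  shows "0 \<le> h t"
proof -
  have "x * ln x \<le> 0" if "0 \<le> x" "x \<le> 1" for x :: real
    using that by (cases "x = 0") (auto intro!: mult_nonneg_nonpos)
  from this[of t] this[of "1 - t"] show ?thesis
    using assms unfolding h_def by (simp add: algebra_simps)
qed

lemma DERIV_h:
  assumes "0 < t" "t < 1"
  shows "(h has_real_derivative ln (1 - t) - ln t) (at t)"
proof (rule has_field_derivative_transform_within_open[where S = "{0<..<1}"])
  show "((\<lambda>t. - t * ln t - (1 - t) * ln (1 - t)) has_real_derivative ln (1 - t) - ln t)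
      (at t)"
    using assms by (auto intro!: derivative_eq_intros)
qed (use assms h_eq_neg_mult_ln in auto)

lemma h_mono_on_lower_half:
  assumes "0 < a" "a \<le> b" "b \<le> 1/2"
  shows "h a \<le> h b"
proof (rule DERIV_nonneg_imp_nondecreasing[OF \<open>a \<le> b\<close>])
  fix t assume "a \<le> t" "t \<le> b"
  with assms have "0 < t" "t < 1" "ln t \<le> ln (1 - t)"
    by auto
  then show "\<exists>y. (h has_real_derivative y) (at t) \<and> 0 \<le> y"
    by (intro exI[of _ "ln (1 - t) - ln t"]) (auto intro: DERIV_h)
qed

lemma concave_nonneg_if_vanishing_at_ends:
  fixes f f' :: "real \<Rightarrow> real"
  assumes deriv: "\<And>t. a < t \<Longrightarrow> t \<le> c \<Longrightarrow> (f has_real_derivative f' t) (at t)"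
    and antimono: "\<And>s t. a < s \<Longrightarrow> s \<le> t \<Longrightarrow> t \<le> c \<Longrightarrow> f' t \<le> f' s"
    and lim: "(f \<longlongrightarrow> 0) (at_right a)" and "f c = 0"
    and x: "a < x" "x \<le> c"
  shows "0 \<le> f x"
proof (rule ccontr)
  assume neg: "\<not> 0 \<le> f x"
  with \<open>f c = 0\<close> \<open>x \<le> c\<close> have "x < c"
    by (cases "x = c") auto
  then obtain z where z: "x < z" "z < c" "f c - f x = (c - x) * f' z"
    using MVT2[of x c f f'] deriv x by auto
  with neg \<open>f c = 0\<close> have "0 < (c - x) * f' z"
    by linarith
  with \<open>x < c\<close> have "0 < f' z"
    by (simp add: zero_less_mult_iff)
  have "f e \<le> f x" if "a < e" "e < x" for e
  proof (rule DERIV_nonneg_imp_nondecreasing[of e x f])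
    fix t assume "e \<le> t" "t \<le> x"
    with that x z \<open>0 < f' z\<close> have "(f has_real_derivative f' t) (at t)" "0 \<le> f' t"
      using deriv antimono[of t z] by auto
    then show "\<exists>y. (f has_real_derivative y) (at t) \<and> 0 \<le> y"
      by blast
  qed (use that in simp)
  then have "eventually (\<lambda>e. f e \<le> f x) (at_right a)"
    unfolding eventually_at_right_field using x by blast
  with lim have "0 \<le> f x"
    by (rule tendsto_upperbound) simp
  with neg show False ..
qed

lemma sq_mult_ln_le_reflected:
  fixes t :: real
  assumes "0 < t" "t \<le> 1/2"
  shows "(1 - t)^2 * ln (1 - t) \<le> t^2 * ln t"
proof -
  let ?f = "\<lambda>x::real. x^2 * ln x - (1 - x)^2 * ln (1 - x)"
  have "0 \<le> ?f t"
  proof (rule concave_nonneg_if_vanishing_at_ends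
      [where f = ?f and f' = "\<lambda>x. 1 - 2 * h x" and a = 0 and c = "1/2"])
    fix x :: real assume "0 < x" "x \<le> 1/2"
    then show "(?f has_real_derivative 1 - 2 * h x) (at x)"
      by (auto intro!: derivative_eq_intros simp: h_eq_neg_mult_ln power2_eq_square divide_simps)
        (simp add: algebra_simps)
  next
    show "(?f \<longlongrightarrow> 0) (at_right 0)"
      by real_asymp
  qed (use assms h_mono_on_lower_half in auto)
  then show ?thesis
    by simp
qed

lemma mult_ln_le_reflected:
  fixes t :: real
  assumes "0 < t" "t \<le> 1/2"
  shows "t * ln t \<le> (1 - t) * ln (1 - t)"
proof -
  let ?f = "\<lambda>x::real. (1 - x) * ln (1 - x) - x * ln x"
  have "0 \<le> ?f t"
  proof (rule concave_nonneg_if_vanishing_at_ends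
      [where f = ?f and f' = "\<lambda>x. - ln (x * (1 - x)) - 2" and a = 0 and c = "1/2"])
    fix x :: real assume "0 < x" "x \<le> 1/2"
    then show "(?f has_real_derivative - ln (x * (1 - x)) - 2) (at x)"
      by (auto intro!: derivative_eq_intros simp: ln_mult)
  next
    fix x y :: real assume "0 < x" "x \<le> y" "y \<le> 1/2"
    moreover have "x * (1 - x) \<le> y * (1 - y)"
      using mult_nonneg_nonneg[of "y - x" "1 - y - x"] \<open>x \<le> y\<close> \<open>y \<le> 1/2\<close>
      by (auto simp: algebra_simps)
    ultimately show "- ln (y * (1 - y)) - 2 \<le> - ln (x * (1 - x)) - 2"
      by simp
  next
    show "(?f \<longlongrightarrow> 0) (at_right 0)"
      by real_asymp
  qed (use assms in auto)
  then show ?thesis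
    by simp
qed

lemma h_div_mult_one_minus_antimono:
  assumes "0 < a" "a \<le> b" "b \<le> 1/2"
  shows "h b / (b * (1 - b)) \<le> h a / (a * (1 - a))"
proof (rule deriv_nonpos_imp_antimono[OF _ _ \<open>a \<le> b\<close>])
  fix t assume "t \<in> {a..b}"
  with assms have t: "0 < t" "t < 1" "t \<le> 1/2"
    by auto
  show "((\<lambda>t. h t / (t * (1 - t))) has_real_derivative
      ((ln (1 - t) - ln t) * (t * (1 - t)) - h t * (1 - 2 * t)) / (t * (1 - t))^2) (at t)"
    using t by (auto intro!: derivative_eq_intros DERIV_h simp: power2_eq_square)
  have "(ln (1 - t) - ln t) * (t * (1 - t)) - h t * (1 - 2 * t)
      = (1 - t)^2 * ln (1 - t) - t^2 * ln t"
    using t by (simp add: h_eq_neg_mult_ln algebra_simps power2_eq_square)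
  with sq_mult_ln_le_reflected[OF t(1,3)]
  show "((ln (1 - t) - ln t) * (t * (1 - t)) - h t * (1 - 2 * t)) / (t * (1 - t))^2 \<le> 0"
    by (simp add: divide_nonpos_nonneg)
qed

lemma h_sq_div_mult_one_minus_mono:
  assumes "0 < a" "a \<le> b" "b \<le> 1/2"
  shows "h a ^ 2 / (a * (1 - a)) \<le> h b ^ 2 / (b * (1 - b))"
proof (rule DERIV_nonneg_imp_nondecreasing[OF \<open>a \<le> b\<close>])
  fix t assume "a \<le> t" "t \<le> b"
  with assms have t: "0 < t" "t < 1" "t \<le> 1/2"
    by auto
  have "((\<lambda>t. h t ^ 2 / (t * (1 - t))) has_real_derivative
      (2 * h t * (ln (1 - t) - ln t) * (t * (1 - t)) - h t ^ 2 * (1 - 2 * t)) / (t * (1 - t))^2) (at t)"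
    using t by (auto intro!: derivative_eq_intros DERIV_h simp: power2_eq_square)
  moreover have "2 * h t * (ln (1 - t) - ln t) * (t * (1 - t)) - h t ^ 2 * (1 - 2 * t)
      = h t * ((1 - t) * ln (1 - t) - t * ln t)"
    using t by (simp add: h_eq_neg_mult_ln algebra_simps power2_eq_square)
  moreover have "0 \<le> h t * ((1 - t) * ln (1 - t) - t * ln t)"
    using h_nonneg[of t] mult_ln_le_reflected[OF t(1,3)] t by simp
  ultimately show
      "\<exists>y. ((\<lambda>t. h t ^ 2 / (t * (1 - t))) has_real_derivative y) (at t) \<and> 0 \<le> y"
    by auto
qed

lemma mult_one_minus_le_quarter: "t * (1 - t) \<le> (1/4 :: real)"
  using zero_le_power2[of "t - 1/2"] by (simp add: power2_eq_square algebra_simps)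

definition lower_root :: "real \<Rightarrow> real" where
  "lower_root u = (1 - sqrt (1 - 4 * u)) / 2"

lemma lower_root_mult_one_minus:
  assumes "u \<le> 1/4"
  shows "lower_root u * (1 - lower_root u) = u"
proof -
  have "(sqrt (1 - 4 * u))^2 = 1 - 4 * u"
    using assms by simp
  then show ?thesis
    unfolding lower_root_def by (simp add: field_simps power2_eq_square)
qed

lemma lower_root_pos: "0 < u \<Longrightarrow> 0 < lower_root u"
  unfolding lower_root_def by simp

lemma lower_root_le_half: "u \<le> 1/4 \<Longrightarrow> lower_root u \<le> 1/2"
  unfolding lower_root_def by simp

lemma lower_root_mono: "u \<le> v \<Longrightarrow> v \<le> 1/4 \<Longrightarrow> lower_root u \<le> lower_root v"
  unfolding lower_root_def by simp

lemma h_lower_root_mult_one_minus: "h (lower_root (t * (1 - t))) = h t"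
proof -
  have "sqrt (1 - 4 * (t * (1 - t))) = \<bar>2 * t - 1\<bar>"
    by (simp add: real_sqrt_abs[symmetric] power2_eq_square algebra_simps)
  then have "lower_root (t * (1 - t)) = t \<or> lower_root (t * (1 - t)) = 1 - t"
    unfolding lower_root_def by (auto simp: abs_if)
  then show ?thesis
    using h_symmetric by auto
qed

lemma h_lower_root_div_antimono:
  assumes "0 < u" "u \<le> v" "v \<le> 1/4"
  shows "h (lower_root v) / v \<le> h (lower_root u) / u"
  using h_div_mult_one_minus_antimono[OF lower_root_pos[OF \<open>0 < u\<close>]
      lower_root_mono[OF \<open>u \<le> v\<close> \<open>v \<le> 1/4\<close>] lower_root_le_half[OF \<open>v \<le> 1/4\<close>]] assms
  by (simp add: lower_root_mult_one_minus)

lemma h_lower_root_sq_div_mono: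
  assumes "0 < u" "u \<le> v" "v \<le> 1/4"
  shows "h (lower_root u) ^ 2 / u \<le> h (lower_root v) ^ 2 / v"
  using h_sq_div_mult_one_minus_mono[OF lower_root_pos[OF \<open>0 < u\<close>]
      lower_root_mono[OF \<open>u \<le> v\<close> \<open>v \<le> 1/4\<close>] lower_root_le_half[OF \<open>v \<le> 1/4\<close>]] assms
  by (simp add: lower_root_mult_one_minus)

lemma h_lower_root_subadditive:
  assumes "0 < u" "0 < v" "u + v \<le> 1/4"
  shows "h (lower_root (u + v)) \<le> h (lower_root u) + h (lower_root v)"
proof -
  let ?r = "h (lower_root (u + v)) / (u + v)"
  have "h (lower_root (u + v)) = (u + v) * ?r"
    using assms by simp
  also have "\<dots> = u * ?r + v * ?r"
    by (rule distrib_right)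
  also have "\<dots> \<le> u * (h (lower_root u) / u) + v * (h (lower_root v) / v)"
    using assms h_lower_root_div_antimono[of u "u + v"] h_lower_root_div_antimono[of v "u + v"]
    by (intro add_mono mult_left_mono) auto
  also have "\<dots> = h (lower_root u) + h (lower_root v)"
    using assms by simp
  finally show ?thesis .
qed

lemma h_lower_root_scale:
  assumes "0 < s" "s \<le> 1" "0 < u" "u \<le> 1/4"
  shows "h (lower_root (s^2 * u)) \<le> s * h (lower_root u)"
proof -
  have "s^2 * u \<le> u"
    using assms by (simp add: mult_left_le_one_le power_le_one)
  then have "h (lower_root (s^2 * u)) ^ 2 / (s^2 * u) \<le> h (lower_root u) ^ 2 / u"
    using assms by (intro h_lower_root_sq_div_mono) auto
  then have "h (lower_root (s^2 * u)) ^ 2 \<le> (s * h (lower_root u)) ^ 2"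
    using assms by (simp add: divide_simps power_mult_distrib algebra_simps)
  moreover have "0 \<le> s * h (lower_root u)"
    using assms lower_root_pos[of u] lower_root_le_half[of u] h_nonneg[of "lower_root u"] by simp
  ultimately show ?thesis
    using power2_le_imp_le by blast
qed

lemma h_le_h_lower_root_diff_add:
  assumes "0 < b" "0 < d" "b + d \<le> 1" "b * d < t * (1 - t)"
  shows "h t \<le> h (lower_root (t * (1 - t) - b * d)) + (b + d) * h (b / (b + d))"
proof -
  define s p where "s = b + d" and "p = b / s"
  have "s * p = b" "s * (1 - p) = d" "0 < p" "p < 1"
    using assms unfolding p_def s_def by (auto simp: field_simps)
  have "b * d = s^2 * (p * (1 - p))"
    by (simp add: power2_eq_square algebra_simps flip: \<open>s * p = b\<close> \<open>s * (1 - p) = d\<close>)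
  have "h t = h (lower_root ((t * (1 - t) - b * d) + b * d))"
    by (simp add: h_lower_root_mult_one_minus)
  also have "\<dots> \<le> h (lower_root (t * (1 - t) - b * d)) + h (lower_root (b * d))"
    using assms mult_one_minus_le_quarter[of t] by (intro h_lower_root_subadditive) auto
  also have "h (lower_root (b * d)) \<le> s * h (lower_root (p * (1 - p)))"
    unfolding \<open>b * d = s^2 * (p * (1 - p))\<close>
    using assms \<open>0 < p\<close> \<open>p < 1\<close> mult_one_minus_le_quarter[of p]
    by (intro h_lower_root_scale) (auto simp: s_def)
  finally show ?thesis
    unfolding h_lower_root_mult_one_minus p_def s_def by simp
qed

theorem mainTheorem4:
  fixes \<alpha> \<beta> \<gamma> \<delta> :: real
  assumes "\<alpha> \<ge> 0" "\<beta> \<ge> 0" "\<gamma> \<ge> 0" "\<delta> \<ge> 0"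
    and "\<alpha> + \<beta> + \<gamma> + \<delta> = 1" and "\<beta> > 0" and "\<delta> > 0" and "\<alpha> + \<gamma> > 0"
  shows "let \<xi> = \<alpha> + \<beta>; D = 4 * \<beta> * \<delta> + (2 * \<xi> - 1)^2; \<mu> = (1 - sqrt D) / 2
         in h \<mu> \<ge> h \<xi> - (\<beta> + \<delta>) * h (\<beta> / (\<beta> + \<delta>))"
proof -
  define \<xi> where "\<xi> = \<alpha> + \<beta>"
  have "1 - \<xi> = \<gamma> + \<delta>"
    using assms(5) unfolding \<xi>_def by simp
  have "\<xi> * (1 - \<xi>) - \<beta> * \<delta> = \<alpha> * \<gamma> + (\<alpha> * \<delta> + \<beta> * \<gamma>)"
    unfolding \<open>1 - \<xi> = \<gamma> + \<delta>\<close> by (simp add: \<xi>_def algebra_simps)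
  moreover have "0 < \<alpha> * \<delta> + \<beta> * \<gamma>"
    using assms by (cases "\<alpha> > 0") (auto intro: add_pos_nonneg add_nonneg_pos)
  ultimately have "\<beta> * \<delta> < \<xi> * (1 - \<xi>)"
    using mult_nonneg_nonneg[OF assms(1,3)] by linarith
  then have bound:
      "h \<xi> \<le> h (lower_root (\<xi> * (1 - \<xi>) - \<beta> * \<delta>)) + (\<beta> + \<delta>) * h (\<beta> / (\<beta> + \<delta>))"
    using assms by (intro h_le_h_lower_root_diff_add) auto
  have \<mu>: "(1 - sqrt (4 * \<beta> * \<delta> + (2 * \<xi> - 1)^2)) / 2
      = lower_root (\<xi> * (1 - \<xi>) - \<beta> * \<delta>)"
    unfolding lower_root_def by (simp add: algebra_simps power2_eq_square)
  show ?thesis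
    unfolding Let_def \<xi>_def[symmetric] \<mu> using bound by linarith
qed

end
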